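(* In each of $\mathsf{G}(\mathbf{K}_D)$, $\mathsf{G}(\mathbf{KD}_D)$ and $\mathsf{G}(\mathbf{KT}_D)$, all logical rules other than the modal rules ($(D_K)$ in $\mathsf{G}(\mathbf{K}_D)$; $(D_K)$ and $(D_D)$ in $\mathsf{G}(\mathbf{KD}_D)$; $(D_K)$ and $(D_T)$ in $\mathsf{G}(\mathbf{KT}_D)$), i.e. the rules $(R\wedge),(L\wedge),(R\vee),(L\vee),(R\rightarrow),(L\rightarrow),(R\neg),(L\neg)$, are height-preserving invertible: whenever the conclusion of an instance of such a rule has a derivation of height $n$, each premise of that instance has a derivation of height at most $n$.
   Context: Language: fix a finite nonempty set $\mathsf{Agt}$ of agents and a countable set $\mathsf{Prop}$ of propositional variables; $\mathsf{Grp}$ is the set of nonempty subsets of $\mathsf{Agt}$. Formulas: $\alpha::=p\mid\bot\mid\alpha\wedge\alpha\mid\alpha\vee\alpha\mid\alpha\rightarrow\alpha\mid\neg\alpha\mid D_G\alpha$ ($p\in\mathsf{Prop}$, $G\in\mathsf{Grp}$). Outmost-boxed formula: one of the form $D_G\gamma$. Sequent calculi (sequents $\Gamma\Rightarrow\Delta$ are pairs of finite multisets; a derivation is a finite tree built from initial sequents by rules; its height is the maximum length of a branch from the end sequent to an initial sequent): $\mathsf{G}(\mathbf{K}_D)$ has initial sequents $\Gamma,p\Rightarrow p,\Delta$ and $\bot,\Gamma\Rightarrow\Delta$; rules $(R\wedge)$ from $\Gamma\Rightarrow\Delta,\alpha_1$ and $\Gamma\Rightarrow\Delta,\alpha_2$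 infer $\Gamma\Rightarrow\Delta,\alpha_1\wedge\alpha_2$; $(L\wedge)$ from $\alpha_1,\alpha_2,\Gamma\Rightarrow\Delta$ infer $\alpha_1\wedge\alpha_2,\Gamma\Rightarrow\Delta$; $(R\vee)$ from $\Gamma\Rightarrow\Delta,\alpha_1,\alpha_2$ infer $\Gamma\Rightarrow\Delta,\alpha_1\vee\alpha_2$; $(L\vee)$ from $\alpha_1,\Gamma\Rightarrow\Delta$ and $\alpha_2,\Gamma\Rightarrow\Delta$ infer $\alpha_1\vee\alpha_2,\Gamma\Rightarrow\Delta$; $(R\rightarrow)$ from $\alpha_1,\Gamma\Rightarrow\Delta,\alpha_2$ infer $\Gamma\Rightarrow\Delta,\alpha_1\rightarrow\alpha_2$; $(L\rightarrow)$ from $\Gamma\Rightarrow\Delta,\alpha_1$ and $\alpha_2,\Gamma\Rightarrow\Delta$ infer $\alpha_1\rightarrow\alpha_2,\Gamma\Rightarrow\Delta$; $(R\neg)$ from $\alpha,\Gamma\Rightarrow\Delta$ infer $\Gamma\Rightarrow\Delta,\neg\alpha$; $(L\neg)$ from $\Gamma\Rightarrow\Delta,\alpha$ infer $\neg\alpha,\Gamma\Rightarrow\Delta$; $(D_K)$: from $\alpha_1,\dots,\alpha_n\Rightarrow\beta$ ($n\ge0$) infer $\Sigma,D_{G_1}\alpha_1,\dots,D_{G_n}\alpha_n\Rightarrow D_G\beta,\Omega$ where all $G_i\subseteq G$, $\Sigma$ consists only of propositional variables, $\bot$, and $D_H\gamma$ with $H\not\subseteq G$, and $\Omega$ only of propositional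 variables, $\bot$, outmost-boxed formulas. $\mathsf{G}(\mathbf{KD}_D)$ adds $(D_D)$: from $\Gamma\Rightarrow$ with $\Gamma\neq\emptyset$ infer $\Sigma,D_{\{a\}}\Gamma\Rightarrow\Omega$, $\Sigma$ only propositional variables, $\bot$, $D_H\gamma$ with $H\neq\{a\}$; $\Omega$ only propositional variables, $\bot$, outmost-boxed formulas. $\mathsf{G}(\mathbf{KT}_D)$ adds to $\mathsf{G}(\mathbf{K}_D)$ $(D_T)$: from $D_G\alpha,\alpha,\Gamma\Rightarrow\Delta$ infer $D_G\alpha,\Gamma\Rightarrow\Delta$. *)

theory Defs
  imports Main "HOL-Library.Multiset" "HOL-Library.Countable"
begin

(* Agents: a finite (nonempty, as every HOL type) type 'a, Agt = UNIV.
   Propositional variables: a countable type 'p.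
   Groups: nonempty sets of agents (enforced by wf_fm). *)

datatype ('a, 'p) fm =
    Prop 'p
  | Bot
  | And "('a, 'p) fm" "('a, 'p) fm"
  | Or "('a, 'p) fm" "('a, 'p) fm"
  | Imp "('a, 'p) fm" "('a, 'p) fm"
  | Neg "('a, 'p) fm"
  | D "'a set" "('a, 'p) fm"

fun wf_fm :: "('a, 'p) fm \<Rightarrow> bool" where
  "wf_fm (Prop p) = True"
| "wf_fm Bot = True"
| "wf_fm (And a b) = (wf_fm a \<and> wf_fm b)"
| "wf_fm (Or a b) = (wf_fm a \<and> wf_fm b)"
| "wf_fm (Imp a b) = (wf_fm a \<and> wf_fm b)"
| "wf_fm (Neg a) = wf_fm a"
| "wf_fm (D G a) = (G \<noteq> {} \<and> wf_fm a)"

type_synonym ('a, 'p) sequent = "('a, 'p) fm multiset \<times> ('a, 'p) fm multiset"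

definition wf_seq :: "('a, 'p) sequent \<Rightarrow> bool" where
  "wf_seq s = ((\<forall>x\<in>#fst s. wf_fm x) \<and> (\<forall>x\<in>#snd s. wf_fm x))"

fun is_atom_or_bot :: "('a, 'p) fm \<Rightarrow> bool" where
  "is_atom_or_bot (Prop p) = True"
| "is_atom_or_bot Bot = True"
| "is_atom_or_bot _ = False"

fun is_boxed :: "('a, 'p) fm \<Rightarrow> bool" where
  "is_boxed (D G a) = True"
| "is_boxed _ = False"

datatype calculus = GK | GKD | GKT

inductive initial :: "('a, 'p) sequent \<Rightarrow> bool" where
  init_p: "initial (add_mset (Prop p) \<Gamma>, add_mset (Prop p) \<Delta>)"
| init_bot: "initial (add_mset Bot \<Gamma>, \<Delta>)"

inductive prop_rule :: "('a, 'p) sequent list \<Rightarrow> ('a, 'p) sequent \<Rightarrow> bool" where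
  RAnd: "prop_rule [(\<Gamma>, add_mset A \<Delta>), (\<Gamma>, add_mset B \<Delta>)] (\<Gamma>, add_mset (And A B) \<Delta>)"
| LAnd: "prop_rule [(add_mset A (add_mset B \<Gamma>), \<Delta>)] (add_mset (And A B) \<Gamma>, \<Delta>)"
| ROr: "prop_rule [(\<Gamma>, add_mset A (add_mset B \<Delta>))] (\<Gamma>, add_mset (Or A B) \<Delta>)"
| LOr: "prop_rule [(add_mset A \<Gamma>, \<Delta>), (add_mset B \<Gamma>, \<Delta>)] (add_mset (Or A B) \<Gamma>, \<Delta>)"
| RImp: "prop_rule [(add_mset A \<Gamma>, add_mset B \<Delta>)] (\<Gamma>, add_mset (Imp A B) \<Delta>)"
| LImp: "prop_rule [(\<Gamma>, add_mset A \<Delta>), (add_mset B \<Gamma>, \<Delta>)] (add_mset (Imp A B) \<Gamma>, \<Delta>)"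
| RNeg: "prop_rule [(add_mset A \<Gamma>, \<Delta>)] (\<Gamma>, add_mset (Neg A) \<Delta>)"
| LNeg: "prop_rule [(\<Gamma>, add_mset A \<Delta>)] (add_mset (Neg A) \<Gamma>, \<Delta>)"

inductive dk_rule :: "('a, 'p) sequent list \<Rightarrow> ('a, 'p) sequent \<Rightarrow> bool" where
  "\<lbrakk> length Gs = length As; \<forall>Gi\<in>set Gs. Gi \<subseteq> G;
     \<forall>x\<in>#\<Sigma>. is_atom_or_bot x \<or> (\<exists>H \<gamma>. x = D H \<gamma> \<and> \<not> H \<subseteq> G);
     \<forall>x\<in>#\<Omega>. is_atom_or_bot x \<or> is_boxed x \<rbrakk>
   \<Longrightarrow> dk_rule [(mset As, {#\<beta>#})]
         (\<Sigma> + mset (map2 D Gs As), add_mset (D G \<beta>) \<Omega>)"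

inductive dd_rule :: "('a, 'p) sequent list \<Rightarrow> ('a, 'p) sequent \<Rightarrow> bool" where
  "\<lbrakk> \<Gamma> \<noteq> {#};
     \<forall>x\<in>#\<Sigma>. is_atom_or_bot x \<or> (\<exists>H \<gamma>. x = D H \<gamma> \<and> H \<noteq> {a});
     \<forall>x\<in>#\<Omega>. is_atom_or_bot x \<or> is_boxed x \<rbrakk>
   \<Longrightarrow> dd_rule [(\<Gamma>, {#})] (\<Sigma> + image_mset (D {a}) \<Gamma>, \<Omega>)"

inductive dt_rule :: "('a, 'p) sequent list \<Rightarrow> ('a, 'p) sequent \<Rightarrow> bool" where
  "dt_rule [(add_mset (D G A) (add_mset A \<Gamma>), \<Delta>)] (add_mset (D G A) \<Gamma>, \<Delta>)"

fun rule :: "calculus \<Rightarrow> ('a, 'p) sequent list \<Rightarrow> ('a, 'p) sequent \<Rightarrow> bool" where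
  "rule GK ps c = (prop_rule ps c \<or> dk_rule ps c)"
| "rule GKD ps c = (prop_rule ps c \<or> dk_rule ps c \<or> dd_rule ps c)"
| "rule GKT ps c = (prop_rule ps c \<or> dk_rule ps c \<or> dt_rule ps c)"

(* hderiv L n s: s has a derivation in calculus L of height (exactly) n,
   height = maximal number of rule applications along a branch *)
inductive hderiv :: "calculus \<Rightarrow> nat \<Rightarrow> ('a, 'p) sequent \<Rightarrow> bool" for L where
  hd_init: "initial s \<Longrightarrow> hderiv L 0 s"
| hd_rule: "\<lbrakk> rule L ps c; length hs = length ps;
              \<forall>i < length ps. hderiv L (hs ! i) (ps ! i) \<rbrakk>
            \<Longrightarrow> hderiv L (Suc (fold max hs 0)) c"

end

theory Submission
  imports Defs "HOL-Library.Product_Plus"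
begin

(* Induction on the height of a derivation of the conclusion, inverting all its
   propositional principal formulas simultaneously.  An initial sequent stays initial when
   a compound formula is replaced by its active formulas.  If the last rule introduces the
   formula X being inverted, its premises are the sequents sought.  If it is another
   propositional rule or (D_T), then X lies in the context shared by all its premises, so
   X is inverted in each premise by induction and the rule is reapplied.  The conclusion
   of (D_K) or (D_D) consists of atoms, bot and boxed formulas only, so X cannot occur in
   it. *)

datatype side = Antecedent | Succedent

fun on_side :: "side \<Rightarrow> ('a, 'p) fm \<Rightarrow> ('a, 'p) sequent" where
  "on_side Antecedent A = ({#A#}, {#})"
| "on_side Succedent A = ({#}, {#A#})"

fun active_parts :: "side \<Rightarrow> ('a, 'p) fm \<Rightarrow> ('a, 'p) sequent list" where
  "active_parts Antecedent (And A B) = [({#A, B#}, {#})]"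
| "active_parts Succedent (And A B) = [({#}, {#A#}), ({#}, {#B#})]"
| "active_parts Antecedent (Or A B) = [({#A#}, {#}), ({#B#}, {#})]"
| "active_parts Succedent (Or A B) = [({#}, {#A, B#})]"
| "active_parts Antecedent (Imp A B) = [({#}, {#A#}), ({#B#}, {#})]"
| "active_parts Succedent (Imp A B) = [({#A#}, {#B#})]"
| "active_parts Antecedent (Neg A) = [({#}, {#A#})]"
| "active_parts Succedent (Neg A) = [({#A#}, {#})]"
| "active_parts _ _ = []"

lemma in_active_parts_not_atomic_or_boxed:
  "p \<in> set (active_parts s X) \<Longrightarrow> \<not> is_atom_or_bot X \<and> \<not> is_boxed X"
  by (cases s; cases X) auto

lemma prop_rule_active_parts:
  "active_parts s X \<noteq> [] \<Longrightarrow> prop_rule (map ((+) S) (active_parts s X)) (S + on_side s X)"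
  by (cases S; cases s; cases X) (auto intro: prop_rule.intros simp: add.commute)

lemma prop_rule_principal:
  assumes "prop_rule ps c"
  obtains S s X where "active_parts s X \<noteq> []" "c = S + on_side s X"
    "ps = map ((+) S) (active_parts s X)"
  using assms
proof cases
  case (RAnd \<Gamma> A \<Delta> B)
  then show thesis by (intro that[of Succedent "And A B" "(\<Gamma>, \<Delta>)"]) auto
next
  case (LAnd A B \<Gamma> \<Delta>)
  then show thesis by (intro that[of Antecedent "And A B" "(\<Gamma>, \<Delta>)"]) auto
next
  case (ROr \<Gamma> A B \<Delta>)
  then show thesis by (intro that[of Succedent "Or A B" "(\<Gamma>, \<Delta>)"]) auto
next
  case (LOr A \<Gamma> \<Delta> B)
  then show thesis by (intro that[of Antecedent "Or A B" "(\<Gamma>, \<Delta>)"]) auto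
next
  case (RImp A \<Gamma> B \<Delta>)
  then show thesis by (intro that[of Succedent "Imp A B" "(\<Gamma>, \<Delta>)"]) auto
next
  case (LImp \<Gamma> A \<Delta> B)
  then show thesis by (intro that[of Antecedent "Imp A B" "(\<Gamma>, \<Delta>)"]) auto
next
  case (RNeg A \<Gamma> \<Delta>)
  then show thesis by (intro that[of Succedent "Neg A" "(\<Gamma>, \<Delta>)"]) auto
next
  case (LNeg \<Gamma> A \<Delta>)
  then show thesis by (intro that[of Antecedent "Neg A" "(\<Gamma>, \<Delta>)"]) auto
qed

lemma dt_rule_principal:
  assumes "dt_rule ps c"
  obtains S G A where "c = S + on_side Antecedent (D G A)" "ps = [c + on_side Antecedent A]"
  using assms by cases (auto intro!: that[of "(_, _)"])

lemma dt_rule_on_side: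
  "dt_rule [S + on_side Antecedent (D G A) + on_side Antecedent A] (S + on_side Antecedent (D G A))"
  using dt_rule.intros[of G A "fst S" "snd S"] by (cases S) (simp add: add_mset_commute)

lemma dk_rule_conclusion_atomic_or_boxed:
  assumes "dk_rule ps (S + on_side s X)"
  shows "is_atom_or_bot X \<or> is_boxed X"
  using assms
proof cases
  case (1 Gs As G \<Sigma> \<Omega> \<beta>)
  have "X \<in># fst (S + on_side s X) + snd (S + on_side s X)"
    by (cases s) auto
  then have "X \<in># \<Sigma> + mset (map2 D Gs As) + add_mset (D G \<beta>) \<Omega>"
    using 1 by simp
  then show ?thesis
    using 1 by (auto simp: set_zip)
qed

lemma dd_rule_conclusion_atomic_or_boxed:
  assumes "dd_rule ps (S + on_side s X)"
  shows "is_atom_or_bot X \<or> is_boxed X"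
  using assms
proof cases
  case (1 \<Gamma> \<Sigma> a \<Omega>)
  have "X \<in># fst (S + on_side s X) + snd (S + on_side s X)"
    by (cases s) auto
  then have "X \<in># \<Sigma> + image_mset (D {a}) \<Gamma> + \<Omega>"
    using 1 by simp
  then show ?thesis
    using 1 by auto
qed

lemma on_side_split:
  assumes "S + on_side s X = T + on_side t Y" "(s, X) \<noteq> (t, Y)"
  shows "\<exists>U. S = U + on_side t Y \<and> T = U + on_side s X"
proof (cases s; cases t)
  assume st: "s = Antecedent" "t = Antecedent"
  with assms have "add_mset X (fst S) = add_mset Y (fst T)" "snd S = snd T" "X \<noteq> Y"
    by (auto simp: prod_eq_iff)
  then obtain U where "fst S = add_mset Y U" "fst T = add_mset X U"
    by (auto simp: add_eq_conv_ex)
  with \<open>snd S = snd T\<close> st show ?thesis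
    by (intro exI[of _ "(U, snd S)"]) (simp add: prod_eq_iff)
next
  assume st: "s = Succedent" "t = Succedent"
  with assms have "add_mset X (snd S) = add_mset Y (snd T)" "fst S = fst T" "X \<noteq> Y"
    by (auto simp: prod_eq_iff)
  then obtain U where "snd S = add_mset Y U" "snd T = add_mset X U"
    by (auto simp: add_eq_conv_ex)
  with \<open>fst S = fst T\<close> st show ?thesis
    by (intro exI[of _ "(fst S, U)"]) (simp add: prod_eq_iff)
next
  assume "s = Antecedent" "t = Succedent"
  with assms show ?thesis
    by (intro exI[of _ "(fst S, snd T)"]) (simp add: prod_eq_iff)
next
  assume "s = Succedent" "t = Antecedent"
  with assms show ?thesis
    by (intro exI[of _ "(fst T, snd S)"]) (simp add: prod_eq_iff)
qed

lemma initial_iff: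
  "initial S \<longleftrightarrow> (\<exists>q. Prop q \<in># fst S \<and> Prop q \<in># snd S) \<or> Bot \<in># fst S"
proof
  show "initial S \<Longrightarrow> (\<exists>q. Prop q \<in># fst S \<and> Prop q \<in># snd S) \<or> Bot \<in># fst S"
    by (induction rule: initial.induct) auto
next
  assume "(\<exists>q. Prop q \<in># fst S \<and> Prop q \<in># snd S) \<or> Bot \<in># fst S"
  then show "initial S"
  proof
    assume "\<exists>q. Prop q \<in># fst S \<and> Prop q \<in># snd S"
    then obtain q \<Gamma> \<Delta> where "S = (add_mset (Prop q) \<Gamma>, add_mset (Prop q) \<Delta>)"
      by (metis mset_add prod.collapse)
    then show "initial S" by (simp add: init_p)
  next
    assume "Bot \<in># fst S"
    then obtain \<Gamma> where "S = (add_mset Bot \<Gamma>, snd S)"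
      by (metis mset_add prod.collapse)
    then show "initial S" by (metis init_bot)
  qed
qed

lemma initial_weaken: "initial S \<Longrightarrow> initial (S + T)"
  by (auto simp: initial_iff)

lemma initial_strip_non_atomic:
  "initial (S + on_side s X) \<Longrightarrow> \<not> is_atom_or_bot X \<Longrightarrow> initial S"
  by (cases s; cases X) (auto simp: initial_iff)

lemma fold_max_le_iff:
  fixes b :: "'a::linorder"
  shows "fold max xs a \<le> b \<longleftrightarrow> a \<le> b \<and> (\<forall>x\<in>set xs. x \<le> b)"
  by (induction xs arbitrary: a) auto

lemma nth_le_fold_max: "i < length xs \<Longrightarrow> xs ! i \<le> fold max xs (a::'a::linorder)"
  using fold_max_le_iff[of xs a "fold max xs a"] by auto

definition hderiv_within :: "calculus \<Rightarrow> nat \<Rightarrow> ('a, 'p) sequent \<Rightarrow> bool" where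
  "hderiv_within L n c \<longleftrightarrow> (\<exists>m\<le>n. hderiv L m c)"

lemma hderiv_within_mono: "hderiv_within L m c \<Longrightarrow> m \<le> n \<Longrightarrow> hderiv_within L n c"
  unfolding hderiv_within_def using order_trans by blast

lemma hderiv_within_rule:
  assumes "rule L ps c" and "\<forall>p\<in>set ps. hderiv_within L n p"
  shows "hderiv_within L (Suc n) c"
proof -
  have "\<forall>i<length ps. \<exists>m. m \<le> n \<and> hderiv L m (ps ! i)"
    using assms(2) by (auto simp: hderiv_within_def)
  then obtain h where h: "\<forall>i<length ps. h i \<le> n \<and> hderiv L (h i) (ps ! i)"
    by metis
  let ?hs = "map h [0..<length ps]"
  have "hderiv L (Suc (fold max ?hs 0)) c"
    by (rule hd_rule[OF assms(1)]) (use h in auto)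
  moreover have "fold max ?hs 0 \<le> n"
    using h by (auto simp: fold_max_le_iff)
  ultimately show ?thesis
    unfolding hderiv_within_def using Suc_le_mono by blast
qed

lemma prop_rule_rule: "prop_rule ps c \<Longrightarrow> rule L ps c"
  by (cases L) auto

definition height_invertible :: "calculus \<Rightarrow> nat \<Rightarrow> ('a, 'p) sequent \<Rightarrow> bool" where
  "height_invertible L n c \<longleftrightarrow>
    (\<forall>S s X p. c = S + on_side s X \<longrightarrow> p \<in> set (active_parts s X) \<longrightarrow> hderiv_within L n (S + p))"

lemma height_invertible_mono:
  "height_invertible L m c \<Longrightarrow> m \<le> n \<Longrightarrow> height_invertible L n c"
  unfolding height_invertible_def using hderiv_within_mono by blast

lemma height_invertible_initial:
  assumes "initial c"
  shows "height_invertible L n c"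
  unfolding height_invertible_def
proof (intro allI impI)
  fix S s X p
  assume "c = S + on_side s X" and "p \<in> set (active_parts s X)"
  with assms have "initial S"
    using initial_strip_non_atomic in_active_parts_not_atomic_or_boxed by blast
  then have "hderiv L 0 (S + p)"
    by (intro hderiv.hd_init initial_weaken)
  then show "hderiv_within L n (S + p)"
    unfolding hderiv_within_def by blast
qed

lemma height_invertible_atomic_or_boxed:
  assumes "\<And>S s X. c = S + on_side s X \<Longrightarrow> is_atom_or_bot X \<or> is_boxed X"
  shows "height_invertible L n c"
  unfolding height_invertible_def
  using assms in_active_parts_not_atomic_or_boxed by blast

lemma height_invertible_prop_rule:
  assumes "prop_rule ps c"
    and IH: "\<forall>q\<in>set ps. hderiv_within L n q \<and> height_invertible L n q"
  shows "height_invertible L (Suc n) c"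
  unfolding height_invertible_def
proof (intro allI impI)
  fix S s X p
  assume c_S: "c = S + on_side s X" and p: "p \<in> set (active_parts s X)"
  obtain T t Y where Y: "active_parts t Y \<noteq> []" and c_T: "c = T + on_side t Y"
    and ps: "ps = map ((+) T) (active_parts t Y)"
    using assms(1) by (rule prop_rule_principal)
  show "hderiv_within L (Suc n) (S + p)"
  proof (cases "(s, X) = (t, Y)")
    case True
    with c_S c_T have "S + p \<in> set ps"
      using ps p by auto
    with IH show ?thesis
      using hderiv_within_mono le_SucI by blast
  next
    case False
    moreover have "S + on_side s X = T + on_side t Y"
      using c_S c_T by simp
    ultimately obtain U where S: "S = U + on_side t Y" and T: "T = U + on_side s X"
      using on_side_split by blast
    have "rule L (map ((+) (U + p)) (active_parts t Y)) (U + p + on_side t Y)"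
      using prop_rule_active_parts[OF Y] by (rule prop_rule_rule)
    moreover have "\<forall>q\<in>set (map ((+) (U + p)) (active_parts t Y)). hderiv_within L n q"
    proof
      fix q assume "q \<in> set (map ((+) (U + p)) (active_parts t Y))"
      then obtain r where r: "r \<in> set (active_parts t Y)" and q: "q = U + p + r"
        by auto
      have "height_invertible L n (T + r)"
        using IH ps r by simp
      moreover have "T + r = (U + r) + on_side s X"
        by (simp add: T add_ac)
      ultimately have "hderiv_within L n (U + r + p)"
        using p unfolding height_invertible_def by blast
      moreover have "U + r + p = q"
        by (simp add: q add_ac)
      ultimately show "hderiv_within L n q"
        by simp
    qed
    ultimately have "hderiv_within L (Suc n) (U + p + on_side t Y)"
      by (rule hderiv_within_rule)
    moreover have "U + p + on_side t Y = S + p"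
      by (simp add: S add_ac)
    ultimately show ?thesis
      by simp
  qed
qed

lemma height_invertible_dt_rule:
  assumes "dt_rule ps c" and IH: "\<forall>q\<in>set ps. height_invertible GKT n q"
  shows "height_invertible GKT (Suc n) c"
  unfolding height_invertible_def
proof (intro allI impI)
  fix S s X p
  assume c_S: "c = S + on_side s X" and p: "p \<in> set (active_parts s X)"
  obtain T G A where c_T: "c = T + on_side Antecedent (D G A)"
    and ps: "ps = [c + on_side Antecedent A]"
    using assms(1) by (rule dt_rule_principal)
  have "S + on_side s X = T + on_side Antecedent (D G A)"
    using c_S c_T by simp
  moreover have "(s, X) \<noteq> (Antecedent, D G A)"
    using p in_active_parts_not_atomic_or_boxed by fastforce
  ultimately obtain U where S: "S = U + on_side Antecedent (D G A)"
    using on_side_split by blast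
  have "rule GKT [U + p + on_side Antecedent (D G A) + on_side Antecedent A]
      (U + p + on_side Antecedent (D G A))"
    using dt_rule_on_side[of "U + p" G A] by simp
  moreover have "\<forall>q\<in>set [U + p + on_side Antecedent (D G A) + on_side Antecedent A].
      hderiv_within GKT n q"
  proof -
    have "height_invertible GKT n ((S + on_side Antecedent A) + on_side s X)"
      using IH ps c_S by (simp add: add_ac)
    then have "hderiv_within GKT n ((S + on_side Antecedent A) + p)"
      using p unfolding height_invertible_def by blast
    then show ?thesis
      by (simp add: S add_ac)
  qed
  ultimately have "hderiv_within GKT (Suc n) (U + p + on_side Antecedent (D G A))"
    by (rule hderiv_within_rule)
  then show "hderiv_within GKT (Suc n) (S + p)"
    by (simp add: S add_ac)
qed

lemma hderiv_height_invertible: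
  assumes "hderiv L n c"
  shows "height_invertible L n c"
  using assms
proof (induction rule: hderiv.induct)
  case (hd_init c)
  then show ?case
    by (rule height_invertible_initial)
next
  case (hd_rule ps c hs)
  define n where "n = fold max hs 0"
  have IH: "\<forall>q\<in>set ps. hderiv_within L n q \<and> height_invertible L n q"
  proof
    fix q assume "q \<in> set ps"
    then obtain i where i: "i < length ps" "ps ! i = q"
      by (auto simp: in_set_conv_nth)
    have "hs ! i \<le> n"
      unfolding n_def by (rule nth_le_fold_max) (use i hd_rule.hyps(2) in simp)
    with hd_rule.IH i show "hderiv_within L n q \<and> height_invertible L n q"
      unfolding hderiv_within_def using height_invertible_mono by blast
  qed
  from hd_rule.hyps(1)
  consider "prop_rule ps c" | "dt_rule ps c" "L = GKT" | "dk_rule ps c" | "dd_rule ps c"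
    by (cases L) auto
  then have "height_invertible L (Suc n) c"
  proof cases
    case 1
    then show ?thesis
      using IH by (rule height_invertible_prop_rule)
  next
    case 2
    then show ?thesis
      using IH height_invertible_dt_rule by blast
  next
    case 3
    then show ?thesis
      by (intro height_invertible_atomic_or_boxed) (use dk_rule_conclusion_atomic_or_boxed in blast)
  next
    case 4
    then show ?thesis
      by (intro height_invertible_atomic_or_boxed) (use dd_rule_conclusion_atomic_or_boxed in blast)
  qed
  then show ?case
    by (simp add: n_def)
qed

theorem proposition3p9:
  fixes L :: calculus
    and ps :: "('a::finite, 'p::countable) sequent list"
    and c :: "('a, 'p) sequent"
  assumes "prop_rule ps c"
    and "wf_seq c"
    and "hderiv L n c"
  shows "\<forall>p \<in> set ps. \<exists>m \<le> n. hderiv L m p"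
proof
  fix p assume "p \<in> set ps"
  obtain S s X where c: "c = S + on_side s X" and ps: "ps = map ((+) S) (active_parts s X)"
    using assms(1) by (rule prop_rule_principal)
  with \<open>p \<in> set ps\<close> obtain q where "q \<in> set (active_parts s X)" and "p = S + q"
    by auto
  with c hderiv_height_invertible[OF assms(3)] show "\<exists>m \<le> n. hderiv L m p"
    unfolding height_invertible_def hderiv_within_def by blast
qed

end
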